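(* Let $n\geq 2$, $k\geq 0$, $0<\gamma<1$, and $$\Omega=\{(x',x_n)\in\mathbb R^{n-1}\times\mathbb R: |x'|<1,\ 0<x_n+\gamma<1-|x'|^2\}.$$ Then there is a constant $C_0>0$ depending only on $n,k,\gamma$ such that the function $$w(x',x_n)=C_0(x_n+\gamma)-C_0(x_n+\gamma)^{\frac{2+k}{2n+2k+2}}(1-|x'|^2)^{\frac{2n+k}{2n+2k+2}}$$ is smooth and convex in $\Omega$, and satisfies $$\det D^2 w\leq |w|^{-n-2-k}(x\cdot Dw-w)^{-k}\ \text{in }\Omega,\qquad w=0\ \text{on }\partial\Omega.$$ *)

theory Defs
  imports "HOL-Analysis.Analysis"
begin

text \<open>Points of R^n are vectors x :: real^'n, with n = CARD('n).
  A distinguished index e :: 'n plays the role of the last coordinate x_n;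
  the remaining coordinates form x'.\<close>

definition partial :: "(real^'n \<Rightarrow> real) \<Rightarrow> 'n \<Rightarrow> real^'n \<Rightarrow> real" where
  "partial f i x = frechet_derivative f (at x) (axis i 1)"

fun iter_partial :: "(real^'n \<Rightarrow> real) \<Rightarrow> 'n list \<Rightarrow> real^'n \<Rightarrow> real" where
  "iter_partial f [] = f"
| "iter_partial f (i # is) = partial (iter_partial f is) i"

definition smooth_on :: "(real^'n) set \<Rightarrow> (real^'n \<Rightarrow> real) \<Rightarrow> bool" where
  "smooth_on S f \<longleftrightarrow> (\<forall>is. \<forall>x\<in>S. iter_partial f is differentiable (at x))"

definition grad :: "(real^'n \<Rightarrow> real) \<Rightarrow> real^'n \<Rightarrow> real^'n" where
  "grad f x = (\<chi> i. partial f i x)"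

definition hessian :: "(real^'n \<Rightarrow> real) \<Rightarrow> real^'n \<Rightarrow> real^'n^'n" where
  "hessian f x = (\<chi> i j. partial (partial f j) i x)"

definition xprime_sq :: "'n \<Rightarrow> real^'n \<Rightarrow> real" where
  "xprime_sq e x = (\<Sum>i\<in>UNIV - {e}. (x $ i)^2)"

definition Omega :: "'n \<Rightarrow> real \<Rightarrow> (real^'n) set" where
  "Omega e \<gamma> = {x. xprime_sq e x < 1 \<and> 0 < x $ e + \<gamma> \<and> x $ e + \<gamma> < 1 - xprime_sq e x}"

end

theory Submission
  imports Defs
begin

(* Write T = x_n + gamma, S = 1 - |x'|^2 and a + b = 1 for the two exponents, so that
   w = C0 (T - T^a S^b). The weighted geometric mean T^a S^b is concave and increasing in S,
   and S is concave, so w is convex; w vanishes where T = 0 or T = S, which is the boundary.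
   The Hessian of w is L D L^T with L unipotent, whence
   det D^2 w = C0^n a b T^(a-2) S^b (2 b T^a S^(b-1))^(n-1).
   On the other side |w| <= C0 T^a S^b and, by Young's inequality,
   0 < x.Dw - w <= C0 (a gamma + 2 b) T^(a-1) S^b. The exponents a, b are exactly those for
   which the powers of T on both sides agree; the leftover power of S is S^(n+k+1) <= 1, and
   a small C0 absorbs the constants. *)

section \<open>Partial derivatives and smoothness\<close>

lemma has_derivative_vec_nth [derivative_intros]:
  "((\<lambda>x. x $ i) has_derivative (\<lambda>h. h $ i)) F"
  using bounded_linear_vec_nth by (rule bounded_linear.has_derivative[OF _ has_derivative_ident])

lemma partial_eq_has_derivative_open:
  assumes "open U" "x \<in> U" "\<And>y. y \<in> U \<Longrightarrow> f y = g y" "(g has_derivative g') (at x)"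
  shows "partial f i x = g' (axis i 1)"
proof -
  have "(f has_derivative g') (at x)"
    using assms by (metis has_derivative_transform_within_open)
  then show ?thesis
    unfolding partial_def by (simp flip: frechet_derivative_at)
qed

lemma partial_cong_open:
  assumes "open U" "x \<in> U" "\<And>y. y \<in> U \<Longrightarrow> f y = g y"
  shows "partial f i x = partial g i x"
proof -
  have "(f has_derivative f') (at x) \<longleftrightarrow> (g has_derivative f') (at x)" for f'
    using assms has_derivative_transform_within_open by (metis (no_types, lifting))
  then show ?thesis
    unfolding partial_def frechet_derivative_def by simp
qed

lemma partial_affine:
  assumes "f differentiable at x"
  shows "partial (\<lambda>y. c + d * f y) i x = d * partial f i x"
proof -
  from assms have f: "(f has_derivative frechet_derivative f (at x)) (at x)"
    by (rule frechet_derivative_works[THEN iffD1])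
  have "((\<lambda>y. c + d * f y) has_derivative (\<lambda>h. d * frechet_derivative f (at x) h)) (at x)"
    by (auto intro!: derivative_eq_intros f)
  then show ?thesis
    unfolding partial_def by (simp flip: frechet_derivative_at)
qed

lemma partial_mult_coord:
  assumes "f differentiable at x"
  shows "partial (\<lambda>y. c * (f y * y $ j)) i x
           = c * (partial f i x * x $ j + (if i = j then f x else 0))"
proof -
  from assms have f: "(f has_derivative frechet_derivative f (at x)) (at x)"
    by (rule frechet_derivative_works[THEN iffD1])
  have "((\<lambda>y. c * (f y * y $ j)) has_derivative
          (\<lambda>h. c * (f x * h $ j + frechet_derivative f (at x) h * x $ j))) (at x)"
    by (auto intro!: derivative_eq_intros f)
  then show ?thesis
    unfolding partial_def by (auto simp flip: frechet_derivative_at simp: axis_def algebra_simps)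
qed

lemma smooth_on_if_gradients_in_class:
  assumes "open U" and "f \<in> F"
    and grad_in_F: "\<And>g. g \<in> F \<Longrightarrow> \<exists>G. (\<forall>j. (\<lambda>x. G x $ j) \<in> F)
                        \<and> (\<forall>x\<in>U. (g has_derivative (\<lambda>h. G x \<bullet> h)) (at x))"
  shows "smooth_on U f"
proof -
  have "\<exists>g\<in>F. \<forall>x\<in>U. iter_partial f is x = g x" for "is"
  proof (induction "is")
    case Nil
    show ?case using \<open>f \<in> F\<close> by auto
  next
    case (Cons i "is")
    then obtain g where "g \<in> F" and g: "\<forall>x\<in>U. iter_partial f is x = g x" by blast
    with grad_in_F obtain G where "\<forall>j. (\<lambda>x. G x $ j) \<in> F"
      and G: "\<forall>x\<in>U. (g has_derivative (\<lambda>h. G x \<bullet> h)) (at x)" by blast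
    moreover have "iter_partial f (i # is) x = G x $ i" if "x \<in> U" for x
      using partial_eq_has_derivative_open[OF \<open>open U\<close> that, of _ g] g G that
      by (simp add: cart_eq_inner_axis)
    ultimately show ?case by auto
  qed
  then show ?thesis
    unfolding smooth_on_def differentiable_def
    by (metis assms(1) grad_in_F has_derivative_transform_within_open)
qed


lemma convex_combination_less:
  fixes u v :: real
  assumes "0 \<le> u" "0 \<le> v" "u + v = 1" "p < q" "p' < q'"
  shows "u * p + v * p' < u * q + v * q'"
proof (cases "u = 0")
  case True
  then show ?thesis using assms by simp
next
  case False
  then have "u * p < u * q" using assms by simp
  moreover have "v * p' \<le> v * q'" using assms by (simp add: mult_left_mono)
  ultimately show ?thesis by simp
qed

lemma weighted_geometric_mean_concave:
  fixes T1 T2 S1 S2 u v a b :: real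
  assumes "0 < T1" "0 < T2" "0 < S1" "0 < S2" "0 \<le> u" "0 \<le> v" "u + v = 1"
    and "0 \<le> a" "0 \<le> b" "a + b = 1"
  shows "u * (T1 powr a * S1 powr b) + v * (T2 powr a * S2 powr b)
           \<le> (u * T1 + v * T2) powr a * (u * S1 + v * S2) powr b"
proof -
  define T S where "T = u * T1 + v * T2" and "S = u * S1 + v * S2"
  have "0 < T" "0 < S"
    using convex_combination_less[of u v 0 T1 0 T2] convex_combination_less[of u v 0 S1 0 S2] assms
    by (simp_all add: T_def S_def)
  have young: "T' powr a * S' powr b \<le> T powr a * S powr b * (a * (T' / T) + b * (S' / S))"
    if "0 < T'" "0 < S'" for T' S'
  proof -
    have "(T' / T) powr a * (S' / S) powr b \<le> a * (T' / T) + b * (S' / S)"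
      using assms that \<open>0 < T\<close> \<open>0 < S\<close> by (intro Youngs_inequality_0) auto
    then show ?thesis
      using that \<open>0 < T\<close> \<open>0 < S\<close> by (simp add: powr_divide divide_le_eq mult_ac)
  qed
  have "u * (T1 powr a * S1 powr b) + v * (T2 powr a * S2 powr b)
      \<le> u * (T powr a * S powr b * (a * (T1 / T) + b * (S1 / S)))
        + v * (T powr a * S powr b * (a * (T2 / T) + b * (S2 / S)))"
    using young[of T1 S1] young[of T2 S2] assms by (intro add_mono mult_left_mono) auto
  also have "\<dots> = T powr a * S powr b * (a * ((u * T1 + v * T2) / T) + b * ((u * S1 + v * S2) / S))"
    by (simp add: field_simps add_divide_distrib)
  also have "\<dots> = T powr a * S powr b"
    using \<open>0 < T\<close> \<open>0 < S\<close> assms by (simp flip: T_def S_def)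
  finally show ?thesis
    by (simp add: T_def S_def)
qed

lemma det_diagonal_plus_rank_one:
  fixes d :: "'n::finite \<Rightarrow> 'a::field" and v :: "'a^'n"
  assumes "v $ e = 1"
  shows "det (\<chi> i j. (if i = j \<and> i \<noteq> e then d i else 0) + d e * v $ i * v $ j) = prod d UNIV"
proof -
  define L :: "'a^'n^'n" where "L = (\<chi> i j. if j = e then v $ i else mat 1 $ i $ j)"
  define D :: "'a^'n^'n" where "D = (\<chi> i j. if i = j then d i else 0)"
  have "det L = 1"
    using cramer_lemma[of e "mat 1 :: 'a^'n^'n" v] assms
    unfolding matrix_vector_mul_lid by (simp add: L_def)
  have "(L ** D ** transpose L) $ i $ j = (if i = j \<and> i \<noteq> e then d i else 0) + d e * v $ i * v $ j"
    for i j
  proof -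
    have "(L ** D ** transpose L) $ i $ j = (\<Sum>k\<in>UNIV. L $ i $ k * d k * L $ j $ k)"
      by (simp add: matrix_matrix_mult_def D_def transpose_def if_distrib sum.If_cases
                    cong del: if_weak_cong)
    also have "\<dots> = d e * v $ i * v $ j + (\<Sum>k\<in>UNIV - {e}. L $ i $ k * d k * L $ j $ k)"
      by (simp add: sum.remove[of UNIV e] L_def mult_ac)
    also have "(\<Sum>k\<in>UNIV - {e}. L $ i $ k * d k * L $ j $ k)
        = (\<Sum>k\<in>UNIV - {e}. if k = i \<and> i = j then d i else 0)"
      by (intro sum.cong) (auto simp: L_def mat_def)
    also have "\<dots> = (if i = j \<and> i \<noteq> e then d i else 0)"
      by (cases "i = j") (auto simp: sum.If_cases)
    finally show ?thesis by simp
  qed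
  then have "(\<chi> i j. (if i = j \<and> i \<noteq> e then d i else 0) + d e * v $ i * v $ j)
      = L ** D ** transpose L"
    by (simp add: vec_eq_iff)
  then show ?thesis
    using \<open>det L = 1\<close> by (simp add: det_mul det_transpose D_def det_diagonal)
qed


section \<open>The domain\<close>

definition xprime :: "'n::finite \<Rightarrow> real^'n \<Rightarrow> real^'n" where
  "xprime e x = (\<chi> i. if i = e then 0 else x $ i)"

lemma xprime_nth: "xprime e x $ i = (if i = e then 0 else x $ i)"
  by (simp add: xprime_def)

lemma inner_xprime: "xprime e x \<bullet> h = (\<Sum>i\<in>UNIV - {e}. x $ i * h $ i)"
  unfolding inner_vec_def by (simp add: sum.remove[of UNIV e] xprime_nth)

lemma xprime_sq_has_derivative:
  "(xprime_sq e has_derivative (\<lambda>h. 2 * (xprime e x \<bullet> h))) (at x)"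
  unfolding xprime_sq_def[abs_def] inner_xprime
  by (auto intro!: derivative_eq_intros simp: sum_distrib_left mult_ac)

lemma xprime_sq_nonneg: "0 \<le> xprime_sq e x"
  by (simp add: xprime_sq_def sum_nonneg)

lemma convex_on_xprime_sq: "convex_on UNIV (xprime_sq (e :: 'n::finite))"
  unfolding convex_on_def
proof (intro conjI convex_UNIV ballI allI impI)
  fix x y :: "real^'n" and u v :: real
  assume "0 \<le> u" "0 \<le> v" "u + v = 1"
  then have "(u * x $ i + v * y $ i)^2 \<le> u * (x $ i)^2 + v * (y $ i)^2" for i
    using convex_power2[unfolded convex_on_def, THEN conjunct2, rule_format, of "x $ i" "y $ i" u v]
    by simp
  then show "xprime_sq e (u *\<^sub>R x + v *\<^sub>R y) \<le> u * xprime_sq e x + v * xprime_sq e y"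
    unfolding xprime_sq_def by (simp add: sum_distrib_left flip: sum.distrib) (rule sum_mono)
qed

lemma convex_combination_coord:
  "u + v = 1 \<Longrightarrow> (u *\<^sub>R x + v *\<^sub>R y) $ e + \<gamma> = u * (x $ e + \<gamma>) + v * (y $ e + \<gamma>)"
  by (simp add: algebra_simps flip: distrib_left)

lemma concave_one_minus_xprime_sq:
  assumes "0 \<le> u" "0 \<le> v" "u + v = 1"
  shows "u * (1 - xprime_sq e x) + v * (1 - xprime_sq e y) \<le> 1 - xprime_sq e (u *\<^sub>R x + v *\<^sub>R y)"
  using convex_on_xprime_sq[of e, unfolded convex_on_def, THEN conjunct2, rule_format, of x y u v]
    assms by (simp add: algebra_simps flip: distrib_left)

lemma open_Omega: "open (Omega e \<gamma>)"
  unfolding Omega_def xprime_sq_def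
  by (intro open_Collect_conj open_Collect_less continuous_intros)

lemma convex_Omega: "convex (Omega (e :: 'n::finite) \<gamma>)"
proof (rule convexI)
  fix x y :: "real^'n" and u v :: real
  assume xy: "x \<in> Omega e \<gamma>" "y \<in> Omega e \<gamma>" and uv: "0 \<le> u" "0 \<le> v" "u + v = 1"
  let ?z = "u *\<^sub>R x + v *\<^sub>R y"
  have "?z $ e + \<gamma> = u * (x $ e + \<gamma>) + v * (y $ e + \<gamma>)"
    using \<open>u + v = 1\<close> by (rule convex_combination_coord)
  moreover have "u * (1 - xprime_sq e x) + v * (1 - xprime_sq e y) \<le> 1 - xprime_sq e ?z"
    using uv by (rule concave_one_minus_xprime_sq)
  moreover have "0 < u * (x $ e + \<gamma>) + v * (y $ e + \<gamma>)"
    using convex_combination_less[OF uv, of 0 "x $ e + \<gamma>" 0 "y $ e + \<gamma>"] xy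
    by (simp add: Omega_def)
  moreover have "u * (x $ e + \<gamma>) + v * (y $ e + \<gamma>)
      < u * (1 - xprime_sq e x) + v * (1 - xprime_sq e y)"
    using convex_combination_less[OF uv] xy by (simp add: Omega_def)
  ultimately show "?z \<in> Omega e \<gamma>"
    unfolding Omega_def using xprime_sq_nonneg[of e ?z] by simp
qed


section \<open>Products of powers of the two defining functions\<close>

definition profile :: "'n::finite \<Rightarrow> real \<Rightarrow> real \<Rightarrow> real \<Rightarrow> real^'n \<Rightarrow> real" where
  "profile e \<gamma> p q x = (x $ e + \<gamma>) powr p * (1 - xprime_sq e x) powr q"

lemma profile_has_derivative:
  assumes "x \<in> Omega e \<gamma>"
  shows "(profile e \<gamma> p q has_derivative
    (\<lambda>h. ((p * profile e \<gamma> (p - 1) q x) *\<^sub>R axis e 1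
          + (- 2 * q * profile e \<gamma> p (q - 1) x) *\<^sub>R xprime e x) \<bullet> h)) (at x)"
proof -
  have "0 < x $ e + \<gamma>" "0 < 1 - xprime_sq e x"
    using assms by (auto simp: Omega_def)
  then show ?thesis
    unfolding profile_def[abs_def]
    by (auto intro!: derivative_eq_intros xprime_sq_has_derivative
        simp: inner_add_left inner_axis' powr_diff algebra_simps)
qed

lemma partial_profile:
  assumes "x \<in> Omega e \<gamma>"
  shows "partial (profile e \<gamma> p q) i x =
    (if i = e then p * profile e \<gamma> (p - 1) q x else - 2 * q * profile e \<gamma> p (q - 1) x * x $ i)"
proof -
  have "partial (profile e \<gamma> p q) i x = ((p * profile e \<gamma> (p - 1) q x) *\<^sub>R axis e 1
          + (- 2 * q * profile e \<gamma> p (q - 1) x) *\<^sub>R xprime e x) \<bullet> axis i 1"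
    by (rule partial_eq_has_derivative_open[OF open_Omega assms _ profile_has_derivative[OF assms]])
      simp
  then show ?thesis
    unfolding inner_axis by (simp add: xprime_nth axis_def)
qed

lemma profile_differentiable: "x \<in> Omega e \<gamma> \<Longrightarrow> profile e \<gamma> p q differentiable at x"
  using profile_has_derivative unfolding differentiable_def by blast

lemma profile_shift:
  assumes "x \<in> Omega e \<gamma>"
  shows "profile e \<gamma> (p + r) (q + s) x
           = (x $ e + \<gamma>) powr r * (1 - xprime_sq e x) powr s * profile e \<gamma> p q x"
proof -
  have "0 < x $ e + \<gamma>" "0 < 1 - xprime_sq e x"
    using assms by (auto simp: Omega_def)
  then show ?thesis
    by (simp add: profile_def powr_add)
qed

inductive_set profile_algebra :: "'n::finite \<Rightarrow> real \<Rightarrow> (real^'n \<Rightarrow> real) set"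
  for e \<gamma> where
  const: "(\<lambda>x. c) \<in> profile_algebra e \<gamma>"
| coord: "(\<lambda>x. x $ i) \<in> profile_algebra e \<gamma>"
| profile: "profile e \<gamma> p q \<in> profile_algebra e \<gamma>"
| add: "f \<in> profile_algebra e \<gamma> \<Longrightarrow> g \<in> profile_algebra e \<gamma> \<Longrightarrow> (\<lambda>x. f x + g x) \<in> profile_algebra e \<gamma>"
| mult: "f \<in> profile_algebra e \<gamma> \<Longrightarrow> g \<in> profile_algebra e \<gamma> \<Longrightarrow> (\<lambda>x. f x * g x) \<in> profile_algebra e \<gamma>"

lemma profile_algebra_gradient:
  assumes "f \<in> profile_algebra e \<gamma>"
  shows "\<exists>G. (\<forall>j. (\<lambda>x. G x $ j) \<in> profile_algebra e \<gamma>)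
           \<and> (\<forall>x\<in>Omega e \<gamma>. (f has_derivative (\<lambda>h. G x \<bullet> h)) (at x))"
  using assms
proof induction
  case (const c)
  show ?case
    by (rule exI[of _ "\<lambda>x. 0"]) (auto intro: profile_algebra.const)
next
  case (coord i)
  have "(\<lambda>x. axis i 1 $ j) \<in> profile_algebra e \<gamma>" for j
    by (rule profile_algebra.const)
  moreover have "((\<lambda>x. x $ i) has_derivative (\<lambda>h. axis i 1 \<bullet> h)) (at x)" for x
    by (simp add: inner_axis' has_derivative_vec_nth)
  ultimately show ?case
    by (intro exI[of _ "\<lambda>x. axis i 1"]) blast
next
  case (profile p q)
  have "(\<lambda>x. xprime e x $ j) \<in> profile_algebra e \<gamma>" for j
    by (cases "j = e") (auto simp: xprime_nth intro: profile_algebra.intros)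
  then show ?case
    by (intro exI[of _ "\<lambda>x. (p * profile e \<gamma> (p - 1) q x) *\<^sub>R axis e 1
                        + (- 2 * q * profile e \<gamma> p (q - 1) x) *\<^sub>R xprime e x"] conjI allI ballI
           profile_has_derivative)
      (simp only: vector_add_component vector_scaleR_component real_scaleR_def;
       intro profile_algebra.intros \<open>\<And>j. (\<lambda>x. xprime e x $ j) \<in> profile_algebra e \<gamma>\<close>)
next
  case (add f g)
  then obtain F G
    where "\<forall>j. (\<lambda>x. F x $ j) \<in> profile_algebra e \<gamma>" "\<forall>j. (\<lambda>x. G x $ j) \<in> profile_algebra e \<gamma>"
    and "\<forall>x\<in>Omega e \<gamma>. (f has_derivative (\<lambda>h. F x \<bullet> h)) (at x)"
        "\<forall>x\<in>Omega e \<gamma>. (g has_derivative (\<lambda>h. G x \<bullet> h)) (at x)"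
    by blast
  then show ?case
    by (intro exI[of _ "\<lambda>x. F x + G x"])
      (auto intro!: profile_algebra.add derivative_eq_intros simp: inner_add_left)
next
  case (mult f g)
  then obtain F G
    where "\<forall>j. (\<lambda>x. F x $ j) \<in> profile_algebra e \<gamma>" "\<forall>j. (\<lambda>x. G x $ j) \<in> profile_algebra e \<gamma>"
    and "\<forall>x\<in>Omega e \<gamma>. (f has_derivative (\<lambda>h. F x \<bullet> h)) (at x)"
        "\<forall>x\<in>Omega e \<gamma>. (g has_derivative (\<lambda>h. G x \<bullet> h)) (at x)"
    by blast
  with mult.hyps show ?case
    by (intro exI[of _ "\<lambda>x. f x *\<^sub>R G x + g x *\<^sub>R F x"])
      (auto intro!: profile_algebra.intros derivative_eq_intros simp: inner_add_left algebra_simps)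
qed

lemma smooth_on_profile_algebra:
  "f \<in> profile_algebra e \<gamma> \<Longrightarrow> smooth_on (Omega e \<gamma>) f"
  by (rule smooth_on_if_gradients_in_class[OF open_Omega _ profile_algebra_gradient])

lemma concave_on_profile:
  fixes e :: "'n::finite"
  assumes "0 \<le> a" "0 \<le> b" "a + b = 1"
  shows "concave_on (Omega e \<gamma>) (profile e \<gamma> a b)"
  unfolding concave_on_iff
proof (intro conjI convex_Omega ballI allI impI)
  fix x y :: "real^'n" and u v :: real
  assume xy: "x \<in> Omega e \<gamma>" "y \<in> Omega e \<gamma>" and uv: "0 \<le> u" "0 \<le> v" "u + v = 1"
  let ?z = "u *\<^sub>R x + v *\<^sub>R y"
  have T: "?z $ e + \<gamma> = u * (x $ e + \<gamma>) + v * (y $ e + \<gamma>)"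
    using \<open>u + v = 1\<close> by (rule convex_combination_coord)
  have S: "u * (1 - xprime_sq e x) + v * (1 - xprime_sq e y) \<le> 1 - xprime_sq e ?z"
    using uv by (rule concave_one_minus_xprime_sq)
  have "0 < u * (1 - xprime_sq e x) + v * (1 - xprime_sq e y)"
    using convex_combination_less[OF uv, of 0 "1 - xprime_sq e x" 0 "1 - xprime_sq e y"] xy
    by (simp add: Omega_def)
  have "u * profile e \<gamma> a b x + v * profile e \<gamma> a b y
      \<le> (u * (x $ e + \<gamma>) + v * (y $ e + \<gamma>)) powr a
        * (u * (1 - xprime_sq e x) + v * (1 - xprime_sq e y)) powr b"
    unfolding profile_def using xy uv assms
    by (intro weighted_geometric_mean_concave) (auto simp: Omega_def)
  also have "\<dots> \<le> profile e \<gamma> a b ?z"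
    unfolding profile_def T using S \<open>0 < u * (1 - xprime_sq e x) + v * (1 - xprime_sq e y)\<close> \<open>0 \<le> b\<close>
    by (intro mult_left_mono powr_mono2) auto
  finally show "u * profile e \<gamma> a b x + v * profile e \<gamma> a b y \<le> profile e \<gamma> a b ?z" .
qed


section \<open>The barrier\<close>

definition barrier :: "'n::finite \<Rightarrow> real \<Rightarrow> real \<Rightarrow> real \<Rightarrow> real \<Rightarrow> real^'n \<Rightarrow> real" where
  "barrier e \<gamma> C a b x = C * (x $ e + \<gamma>) - C * profile e \<gamma> a b x"

lemma barrier_in_profile_algebra: "barrier e \<gamma> C a b \<in> profile_algebra e \<gamma>"
proof -
  have "barrier e \<gamma> C a b = (\<lambda>x. C * (x $ e + \<gamma>) + (- C) * profile e \<gamma> a b x)"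
    by (simp add: barrier_def fun_eq_iff)
  then show ?thesis
    by (simp only:) (intro profile_algebra.intros)
qed

lemma convex_on_barrier:
  assumes "0 \<le> C" "0 \<le> a" "0 \<le> b" "a + b = 1"
  shows "convex_on (Omega e \<gamma>) (barrier e \<gamma> C a b)"
proof -
  have "convex_on (Omega e \<gamma>) (\<lambda>x. C * (x $ e + \<gamma>))"
    unfolding convex_on_def using convex_Omega convex_combination_coord
    by (simp add: algebra_simps)
  moreover have "concave_on (Omega e \<gamma>) (\<lambda>x. C * profile e \<gamma> a b x)"
    using concave_on_cmul[OF \<open>0 \<le> C\<close> concave_on_profile[OF assms(2-4)]] .
  ultimately show ?thesis
    unfolding barrier_def[abs_def] by (rule convex_on_diff)
qed

lemma barrier_frontier:
  assumes "a + b = 1" and "x \<in> frontier (Omega e \<gamma>)"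
  shows "barrier e \<gamma> C a b x = 0"
proof -
  let ?K = "{x. 0 \<le> x $ e + \<gamma> \<and> x $ e + \<gamma> \<le> 1 - xprime_sq e x}"
  have "closed ?K"
    unfolding xprime_sq_def by (intro closed_Collect_conj closed_Collect_le continuous_intros)
  moreover have "Omega e \<gamma> \<subseteq> ?K"
    by (auto simp: Omega_def)
  ultimately have "x \<in> ?K" and "x \<notin> Omega e \<gamma>"
    using assms(2) closure_minimal by (auto simp: frontier_def interior_open[OF open_Omega])
  then have "x $ e + \<gamma> = 0 \<or> (0 < x $ e + \<gamma> \<and> x $ e + \<gamma> = 1 - xprime_sq e x)"
    by (auto simp: Omega_def)
  then show ?thesis
  proof
    assume "0 < x $ e + \<gamma> \<and> x $ e + \<gamma> = 1 - xprime_sq e x"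
    then have "profile e \<gamma> a b x = x $ e + \<gamma>"
      using assms(1) by (auto simp: profile_def simp flip: powr_add)
    then show ?thesis
      by (simp add: barrier_def)
  qed (simp add: barrier_def profile_def)
qed

lemma partial_barrier:
  assumes "x \<in> Omega e \<gamma>"
  shows "partial (barrier e \<gamma> C a b) j x = C * (if j = e then 1 - a * profile e \<gamma> (a - 1) b x
                                               else 2 * b * profile e \<gamma> a (b - 1) x * x $ j)"
proof -
  obtain F where F: "(profile e \<gamma> a b has_derivative F) (at x)"
    using profile_differentiable[OF assms] unfolding differentiable_def by blast
  have "(barrier e \<gamma> C a b has_derivative (\<lambda>h. C * h $ e - C * F h)) (at x)"
    unfolding barrier_def[abs_def] by (auto intro!: derivative_eq_intros F)
  then have "partial (barrier e \<gamma> C a b) j x = C * axis j 1 $ e - C * partial (profile e \<gamma> a b) j x"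
    using F unfolding partial_def by (simp flip: frechet_derivative_at)
  then show ?thesis
    by (auto simp: partial_profile[OF assms] axis_def algebra_simps)
qed

lemma partial_partial_barrier:
  assumes "x \<in> Omega e \<gamma>"
  shows "partial (partial (barrier e \<gamma> C a b) j) i x =
    (if j = e then - C * a * partial (profile e \<gamma> (a - 1) b) i x
     else 2 * b * C * (partial (profile e \<gamma> a (b - 1)) i x * x $ j
                       + (if i = j then profile e \<gamma> a (b - 1) x else 0)))"
proof (cases "j = e")
  case True
  then have "partial (partial (barrier e \<gamma> C a b) j) i x
      = partial (\<lambda>y. C + (- C * a) * profile e \<gamma> (a - 1) b y) i x"
    by (intro partial_cong_open[OF open_Omega assms]) (simp add: partial_barrier algebra_simps)
  also have "\<dots> = - C * a * partial (profile e \<gamma> (a - 1) b) i x"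
    by (rule partial_affine[OF profile_differentiable[OF assms]])
  finally show ?thesis
    using True by simp
next
  case False
  then have "partial (partial (barrier e \<gamma> C a b) j) i x
      = partial (\<lambda>y. (2 * b * C) * (profile e \<gamma> a (b - 1) y * y $ j)) i x"
    by (intro partial_cong_open[OF open_Omega assms]) (simp add: partial_barrier algebra_simps)
  also have "\<dots> = 2 * b * C * (partial (profile e \<gamma> a (b - 1)) i x * x $ j
                       + (if i = j then profile e \<gamma> a (b - 1) x else 0))"
    by (rule partial_mult_coord[OF profile_differentiable[OF assms]])
  finally show ?thesis
    using False by simp
qed

lemma hessian_barrier:
  fixes C :: real
  assumes "x \<in> Omega e \<gamma>" and "a + b = 1"
  defines "T \<equiv> x $ e + \<gamma>" and "S \<equiv> 1 - xprime_sq e x"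
  defines "d \<equiv> \<lambda>i. if i = e then C * a * b * profile e \<gamma> (a - 2) b x
                     else 2 * b * C * profile e \<gamma> a (b - 1) x"
    and "v \<equiv> \<chi> i. if i = e then 1 else 2 * T / S * x $ i"
  shows "hessian (barrier e \<gamma> C a b) x
           = (\<chi> i j. (if i = j \<and> i \<noteq> e then d i else 0) + d e * v $ i * v $ j)"
proof -
  have pos: "0 < x $ e + \<gamma>" "0 < 1 - xprime_sq e x"
    using assms(1) by (auto simp: Omega_def)
  have shift1: "profile e \<gamma> (a - 1) (b - 1) x = T / S * profile e \<gamma> (a - 2) b x"
    using profile_shift[OF assms(1), of "a - 2" 1 b "- 1"] pos
    by (simp add: T_def S_def powr_minus divide_inverse)
  have shift2: "profile e \<gamma> a (b - 2) x = (T / S)^2 * profile e \<gamma> (a - 2) b x"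
    using profile_shift[OF assms(1), of "a - 2" 2 b "- 2"] pos
    by (simp add: T_def S_def powr_minus power_divide powr_realpow field_simps)
  have "b = 1 - a"
    using assms(2) by simp
  then show ?thesis
    unfolding hessian_def vec_eq_iff
    by (auto simp: partial_partial_barrier[OF assms(1)] partial_profile[OF assms(1)]
        d_def v_def shift1 shift2 field_simps power2_eq_square)
      (simp_all add: \<open>b = 1 - a\<close> algebra_simps)
qed

lemma det_hessian_barrier:
  fixes e :: "'n::finite"
  assumes "x \<in> Omega e \<gamma>" and "a + b = 1"
  shows "det (hessian (barrier e \<gamma> C a b) x)
           = C * a * b * profile e \<gamma> (a - 2) b x
             * (2 * b * C * profile e \<gamma> a (b - 1) x) ^ (CARD('n) - 1)"
proof -
  define d where "d i = (if i = e then C * a * b * profile e \<gamma> (a - 2) b x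
                         else 2 * b * C * profile e \<gamma> a (b - 1) x)" for i
  have "det (hessian (barrier e \<gamma> C a b) x) = prod d UNIV"
    unfolding hessian_barrier[OF assms] d_def[symmetric] by (rule det_diagonal_plus_rank_one) simp
  also have "\<dots> = d e * prod d (UNIV - {e})"
    by (simp add: prod.remove)
  also have "prod d (UNIV - {e}) = (2 * b * C * profile e \<gamma> a (b - 1) x) ^ (CARD('n) - 1)"
    by (simp add: d_def card_Diff_singleton)
  finally show ?thesis
    by (simp add: d_def)
qed

lemma inner_grad_minus_barrier:
  assumes "x \<in> Omega e \<gamma>" and "a + b = 1"
  shows "x \<bullet> grad (barrier e \<gamma> C a b) x - barrier e \<gamma> C a b x
           = C * (a * \<gamma> * profile e \<gamma> (a - 1) b x + 2 * b * profile e \<gamma> a (b - 1) x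
                  - b * profile e \<gamma> a b x - \<gamma>)"
proof -
  define T S where "T = x $ e + \<gamma>" and "S = 1 - xprime_sq e x"
  define P1 P2 P3 where "P1 = profile e \<gamma> (a - 1) b x" and "P2 = profile e \<gamma> a (b - 1) x"
    and "P3 = profile e \<gamma> a b x"
  have TP1: "T * P1 = P3"
    using profile_shift[OF assms(1), of "a - 1" 1 b 0] assms(1)
    by (simp add: T_def P1_def P3_def Omega_def)
  have SP2: "S * P2 = P3"
    using profile_shift[OF assms(1), of a 0 "b - 1" 1] assms(1)
    by (simp add: S_def P2_def P3_def Omega_def)
  have w: "barrier e \<gamma> C a b x = C * (T - P3)"
    by (simp add: barrier_def T_def P3_def algebra_simps)
  have "x \<bullet> grad (barrier e \<gamma> C a b) x
      = x $ e * partial (barrier e \<gamma> C a b) e x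
        + (\<Sum>i\<in>UNIV - {e}. x $ i * partial (barrier e \<gamma> C a b) i x)"
    by (simp add: inner_vec_def grad_def sum.remove[of UNIV e])
  also have "(\<Sum>i\<in>UNIV - {e}. x $ i * partial (barrier e \<gamma> C a b) i x)
      = C * (2 * b * P2) * xprime_sq e x"
    by (simp add: partial_barrier[OF assms(1)] P2_def xprime_sq_def sum_distrib_left
        power2_eq_square mult_ac)
  finally have "x \<bullet> grad (barrier e \<gamma> C a b) x - barrier e \<gamma> C a b x
      = C * ((T - \<gamma>) * (1 - a * P1) + 2 * b * P2 * (1 - S) - (T - P3))"
    by (simp add: partial_barrier[OF assms(1)] w T_def S_def P1_def algebra_simps)
  also have "\<dots> = C * (T - a * (T * P1) - \<gamma> + a * \<gamma> * P1 + 2 * b * P2 - 2 * b * (S * P2) - T + P3)"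
    by (simp add: algebra_simps)
  also have "\<dots> = C * (a * \<gamma> * P1 + 2 * b * P2 - b * P3 - \<gamma>)"
  proof -
    have "a = 1 - b"
      using assms(2) by simp
    then show ?thesis
      unfolding TP1 SP2 by (simp only:) (simp add: algebra_simps)
  qed
  finally show ?thesis
    by (simp add: P1_def P2_def P3_def)
qed


section \<open>The Monge-Ampere inequality\<close>

lemma profile_powers_order:
  fixes a b T S :: real
  assumes "0 < a" "0 < b" "a + b = 1" "0 < T" "T < S" "S \<le> 1"
  shows "T < T powr a * S powr b"
    and "T powr a * S powr b \<le> T powr a * S powr (b - 1)"
    and "T powr a * S powr (b - 1) \<le> T powr (a - 1) * S powr b"
proof -
  have "T = T powr a * T powr b"
    using assms by (simp flip: powr_add)
  also have "\<dots> < T powr a * S powr b"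
    using assms by (simp add: powr_less_mono2)
  finally show "T < T powr a * S powr b" .
  have "S powr b = S * S powr (b - 1)" and "T powr a = T * T powr (a - 1)"
    using powr_add[of S 1 "b - 1"] powr_add[of T 1 "a - 1"] assms by simp_all
  then show "T powr a * S powr b \<le> T powr a * S powr (b - 1)"
    and "T powr a * S powr (b - 1) \<le> T powr (a - 1) * S powr b"
    using assms by (simp_all add: mult_right_le_one_le mult_le_cancel_right mult_ac
        not_less zero_le_mult_iff)
qed

lemma Youngs_inequality_profile:
  fixes a b T S \<gamma> :: real
  assumes "0 \<le> a" "0 \<le> b" "a + b = 1" "0 < T" "0 < S" "0 < \<gamma>"
  shows "\<gamma> powr a \<le> a * (\<gamma> * (T powr (a - 1) * S powr b)) + b * (T powr a * S powr (b - 1))"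
proof -
  have "(T powr (a - 1) * S powr b) powr a * (T powr a * S powr (b - 1)) powr b
      = T powr ((a - 1) * a + a * b) * S powr (b * a + (b - 1) * b)"
    using assms by (simp add: powr_mult powr_powr powr_add)
  also have "\<dots> = 1"
  proof -
    have "(a - 1) * a + a * b = 0" and "b * a + (b - 1) * b = 0"
      using assms by (simp_all add: algebra_simps flip: distrib_left distrib_right)
    then show ?thesis
      using assms by simp
  qed
  finally have "(\<gamma> * (T powr (a - 1) * S powr b)) powr a * (T powr a * S powr (b - 1)) powr b
      = \<gamma> powr a"
    using assms by (simp add: powr_mult)
  moreover have "(\<gamma> * (T powr (a - 1) * S powr b)) powr a * (T powr a * S powr (b - 1)) powr b
      \<le> a * (\<gamma> * (T powr (a - 1) * S powr b)) + b * (T powr a * S powr (b - 1))"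
    using assms by (intro Youngs_inequality_0) auto
  ultimately show ?thesis
    by simp
qed

lemma bounds_of_inner_grad_minus_barrier:
  fixes a b T S \<gamma> :: real
  assumes "0 < a" "0 < b" "a + b = 1" "0 < T" "T < S" "S \<le> 1" "0 < \<gamma>" "\<gamma> < 1"
  defines "P1 \<equiv> T powr (a - 1) * S powr b" and "P2 \<equiv> T powr a * S powr (b - 1)"
    and "P3 \<equiv> T powr a * S powr b"
  shows "0 < a * \<gamma> * P1 + 2 * b * P2 - b * P3 - \<gamma>"
    and "a * \<gamma> * P1 + 2 * b * P2 - b * P3 - \<gamma> \<le> (a * \<gamma> + 2 * b) * P1"
proof -
  note order = profile_powers_order[OF assms(1-6)]
  have "P3 \<le> P2" "P2 \<le> P1"
    using order(2,3) by (simp_all add: P1_def P2_def P3_def)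
  have "\<gamma> < \<gamma> powr a"
    using powr_less_mono'[of \<gamma> a 1] assms by simp
  also have "\<gamma> powr a \<le> a * \<gamma> * P1 + b * P2"
    using Youngs_inequality_profile[of a b T S \<gamma>] assms by (simp add: mult_ac)
  finally show "0 < a * \<gamma> * P1 + 2 * b * P2 - b * P3 - \<gamma>"
    using \<open>P3 \<le> P2\<close> \<open>0 < b\<close> mult_left_mono[of P3 P2 b] by linarith
  have "0 \<le> b * P3"
    using \<open>0 < b\<close> by (simp add: P3_def)
  moreover have "b * P2 \<le> b * P1"
    using \<open>P2 \<le> P1\<close> \<open>0 < b\<close> by simp
  ultimately show "a * \<gamma> * P1 + 2 * b * P2 - b * P3 - \<gamma> \<le> (a * \<gamma> + 2 * b) * P1"
    using \<open>0 < \<gamma>\<close> by (simp add: algebra_simps)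
qed

lemma barrier_exponents:
  fixes n k :: real
  assumes "1 \<le> n" "0 \<le> k"
  shows "0 < (2 + k) / (2 * n + 2 * k + 2)" and "0 < (2 * n + k) / (2 * n + 2 * k + 2)"
    and "(2 + k) / (2 * n + 2 * k + 2) + (2 * n + k) / (2 * n + 2 * k + 2) = 1"
  using assms by (simp_all flip: add_divide_distrib)

lemma det_bound_by_profile_powers:
  fixes T S C K k :: real and m :: nat
  assumes "1 \<le> m" "0 \<le> k" and pos: "0 < T" "0 < S" "0 < C" "0 < K" and "S \<le> 1"
    and a_def: "a = (2 + k) / (2 * real m + 2 * k + 2)"
    and b_def: "b = (2 * real m + k) / (2 * real m + 2 * k + 2)"
    and small: "C powr (2 * real m + 2 * k + 2) * (a * b * (2 * b) ^ (m - 1) * K powr k) \<le> 1"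
  shows "C * a * b * (T powr (a - 2) * S powr b)
           * (2 * b * C * (T powr a * S powr (b - 1))) ^ (m - 1)
           \<le> (C * (T powr a * S powr b)) powr (- (real m + 2 + k))
             * (C * (K * (T powr (a - 1) * S powr b))) powr (- k)"
    (is "?lhs \<le> ?rhs")
proof -
  define M where "M = a * b * (2 * b) ^ (m - 1) * K powr k"
  have "0 < a" "0 < b"
    using assms(1,2) by (simp_all add: a_def b_def)
  then have "0 < M"
    using pos by (simp add: M_def)
  have m1: "real (m - Suc 0) = real m - 1"
    using assms(1) by simp
  have ln_lhs: "ln ?lhs = ln C + ln a + ln b + (a - 2) * ln T + b * ln S
                          + (real m - 1) * (ln 2 + ln b + ln C + a * ln T + (b - 1) * ln S)"
    using pos \<open>0 < a\<close> \<open>0 < b\<close>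
    by (simp add: ln_mult ln_realpow ln_powr m1 add.assoc del: of_nat_diff)
  have ln_rhs: "ln ?rhs = - (real m + 2 + k) * (ln C + a * ln T + b * ln S)
                          - k * (ln C + ln K + (a - 1) * ln T + b * ln S)"
    using pos by (simp add: ln_mult ln_powr add.assoc)
  have ln_M: "ln M = ln a + ln b + (real m - 1) * (ln 2 + ln b) + k * ln K"
    using pos \<open>0 < a\<close> \<open>0 < b\<close>
    by (simp add: M_def ln_mult ln_realpow ln_powr m1 distrib_left del: of_nat_diff)
  have "ln (C powr (2 * real m + 2 * k + 2) * M) \<le> 0"
    using small pos \<open>0 < M\<close> unfolding M_def[symmetric] by simp
  then have "(2 * real m + 2 * k + 2) * ln C + ln M \<le> 0"
    using pos \<open>0 < M\<close> by (simp add: ln_mult ln_powr)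
  moreover have "(real m + k + 1) * ln S \<le> 0"
    using pos \<open>S \<le> 1\<close> \<open>0 \<le> k\<close> by (simp add: mult_nonneg_nonpos)
  moreover have "a * (2 * real m + 2 * k + 2) * ln T = (2 + k) * ln T"
    and "b * (2 * real m + 2 * k + 2) * ln S = (2 * real m + k) * ln S"
    using assms(1,2) by (simp_all add: a_def b_def)
  then have "ln ?rhs - ln ?lhs
      = - ((2 * real m + 2 * k + 2) * ln C + ln M) - (real m + k + 1) * ln S"
    unfolding ln_lhs ln_rhs ln_M by (simp add: algebra_simps; linarith)
  ultimately have "ln ?lhs \<le> ln ?rhs"
    by linarith
  then show ?thesis
    using pos \<open>0 < a\<close> \<open>0 < b\<close> by simp
qed

lemma det_hessian_barrier_le:
  fixes e :: "'n::finite" and k \<gamma> C :: real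
  defines "n \<equiv> real CARD('n)"
  defines "a \<equiv> (2 + k) / (2 * n + 2 * k + 2)" and "b \<equiv> (2 * n + k) / (2 * n + 2 * k + 2)"
  assumes x: "x \<in> Omega e \<gamma>" and "0 \<le> k" "0 < \<gamma>" "\<gamma> < 1" "0 < C"
    and small: "C powr (2 * n + 2 * k + 2)
                  * (a * b * (2 * b) ^ (CARD('n) - 1) * (a * \<gamma> + 2 * b) powr k) \<le> 1"
  shows "det (hessian (barrier e \<gamma> C a b) x)
           \<le> \<bar>barrier e \<gamma> C a b x\<bar> powr (- (n + 2 + k))
             * (x \<bullet> grad (barrier e \<gamma> C a b) x - barrier e \<gamma> C a b x) powr (- k)"
proof -
  define T S where "T = x $ e + \<gamma>" and "S = 1 - xprime_sq e x"
  define P1 P2 P3 where "P1 = T powr (a - 1) * S powr b" and "P2 = T powr a * S powr (b - 1)"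
    and "P3 = T powr a * S powr b"
  define K L where "K = a * \<gamma> + 2 * b" and "L = a * \<gamma> * P1 + 2 * b * P2 - b * P3 - \<gamma>"
  have "1 \<le> n"
    by (simp add: n_def Suc_le_eq)
  then have "0 < a" "0 < b" "a + b = 1"
    using barrier_exponents \<open>0 \<le> k\<close> by (simp_all add: a_def b_def)
  have "0 < T" "T < S" "S \<le> 1"
    using x xprime_sq_nonneg[of e x] by (auto simp: Omega_def T_def S_def)
  have "T < P3"
    using profile_powers_order(1)[OF \<open>0 < a\<close> \<open>0 < b\<close> \<open>a + b = 1\<close> \<open>0 < T\<close> \<open>T < S\<close> \<open>S \<le> 1\<close>]
    by (simp add: P3_def)
  have "0 < L" "L \<le> K * P1"
    using bounds_of_inner_grad_minus_barrier[OF \<open>0 < a\<close> \<open>0 < b\<close> \<open>a + b = 1\<close> \<open>0 < T\<close> \<open>T < S\<close>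
        \<open>S \<le> 1\<close> \<open>0 < \<gamma>\<close> \<open>\<gamma> < 1\<close>]
    by (simp_all add: L_def K_def P1_def P2_def P3_def)
  have "det (hessian (barrier e \<gamma> C a b) x)
      = C * a * b * (T powr (a - 2) * S powr b) * (2 * b * C * P2) ^ (CARD('n) - 1)"
    using det_hessian_barrier[OF x \<open>a + b = 1\<close>] by (simp add: profile_def T_def S_def P2_def)
  also have "\<dots> \<le> (C * P3) powr (- (n + 2 + k)) * (C * (K * P1)) powr (- k)"
    unfolding P1_def P2_def P3_def n_def
  proof (rule det_bound_by_profile_powers)
    show "0 < K"
      using \<open>0 < a\<close> \<open>0 < b\<close> \<open>0 < \<gamma>\<close> by (simp add: K_def add_pos_pos)
    show "C powr (2 * real CARD('n) + 2 * k + 2)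
            * (a * b * (2 * b) ^ (CARD('n) - 1) * K powr k) \<le> 1"
      using small by (simp add: n_def K_def)
  qed (use \<open>0 \<le> k\<close> \<open>0 < T\<close> \<open>T < S\<close> \<open>S \<le> 1\<close> \<open>0 < C\<close> in \<open>simp_all add: a_def b_def n_def Suc_le_eq\<close>)
  also have "\<dots> \<le> (C * (P3 - T)) powr (- (n + 2 + k)) * (C * L) powr (- k)"
    using \<open>T < P3\<close> \<open>0 < L\<close> \<open>L \<le> K * P1\<close> \<open>1 \<le> n\<close> \<open>0 \<le> k\<close> \<open>0 < C\<close> \<open>0 < T\<close>
    by (intro mult_mono powr_mono2') simp_all
  also have "\<dots> = \<bar>barrier e \<gamma> C a b x\<bar> powr (- (n + 2 + k))
                  * (x \<bullet> grad (barrier e \<gamma> C a b) x - barrier e \<gamma> C a b x) powr (- k)"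
  proof -
    have "barrier e \<gamma> C a b x = - (C * (P3 - T))"
      by (simp add: barrier_def profile_def P3_def T_def S_def algebra_simps)
    moreover have "x \<bullet> grad (barrier e \<gamma> C a b) x - barrier e \<gamma> C a b x = C * L"
      using inner_grad_minus_barrier[OF x \<open>a + b = 1\<close>]
      by (simp add: profile_def L_def P1_def P2_def P3_def T_def S_def)
    ultimately show ?thesis
      using \<open>T < P3\<close> \<open>0 < C\<close> by simp
  qed
  finally show ?thesis .
qed

lemma ex_pos_powr_mult_le_one:
  fixes M p :: real
  assumes "0 \<le> M" "1 \<le> p"
  shows "\<exists>C>0. C powr p * M \<le> 1"
proof (intro exI conjI)
  define C where "C = 1 / (M + 1)"
  show "0 < C"
    using assms by (simp add: C_def)
  have "C powr p \<le> C powr 1"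
    using assms by (intro powr_mono') (auto simp: C_def)
  then have "C powr p * M \<le> C * M"
    using assms \<open>0 < C\<close> by (simp add: mult_right_mono)
  also have "\<dots> \<le> 1"
    using assms by (simp add: C_def)
  finally show "C powr p * M \<le> 1" .
qed

theorem lemma4p2:
  fixes e :: "'n::finite" and k \<gamma> :: real
  assumes "CARD('n) \<ge> 2" and "k \<ge> 0" and "0 < \<gamma>" and "\<gamma> < 1"
  shows "\<exists>C0 > 0.
    let n = real CARD('n);
        w = (\<lambda>x::real^'n. C0 * (x $ e + \<gamma>)
              - C0 * (x $ e + \<gamma>) powr ((2 + k) / (2 * n + 2 * k + 2))
                   * (1 - xprime_sq e x) powr ((2 * n + k) / (2 * n + 2 * k + 2)))
    in smooth_on (Omega e \<gamma>) w
     \<and> convex_on (Omega e \<gamma>) w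
     \<and> (\<forall>x\<in>Omega e \<gamma>. det (hessian w x)
            \<le> \<bar>w x\<bar> powr (- (n + 2 + k)) * (x \<bullet> grad w x - w x) powr (- k))
     \<and> (\<forall>x\<in>frontier (Omega e \<gamma>). w x = 0)"
proof -
  define n where "n = real CARD('n)"
  define a b where "a = (2 + k) / (2 * n + 2 * k + 2)" and "b = (2 * n + k) / (2 * n + 2 * k + 2)"
  have "2 \<le> n"
    using \<open>CARD('n) \<ge> 2\<close> by (simp add: n_def)
  then have "0 < a" "0 < b" "a + b = 1"
    using barrier_exponents[of n k] \<open>k \<ge> 0\<close> by (simp_all add: a_def b_def)
  obtain C0 :: real where "0 < C0" and small:
    "C0 powr (2 * n + 2 * k + 2) * (a * b * (2 * b) ^ (CARD('n) - 1) * (a * \<gamma> + 2 * b) powr k) \<le> 1"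
    using ex_pos_powr_mult_le_one[of "a * b * (2 * b) ^ (CARD('n) - 1) * (a * \<gamma> + 2 * b) powr k"
        "2 * n + 2 * k + 2"] \<open>0 < a\<close> \<open>0 < b\<close> \<open>2 \<le> n\<close> \<open>k \<ge> 0\<close>
    by auto
  have "smooth_on (Omega e \<gamma>) (barrier e \<gamma> C0 a b)"
    by (rule smooth_on_profile_algebra[OF barrier_in_profile_algebra])
  moreover have "convex_on (Omega e \<gamma>) (barrier e \<gamma> C0 a b)"
    using \<open>0 < C0\<close> \<open>0 < a\<close> \<open>0 < b\<close> \<open>a + b = 1\<close> by (intro convex_on_barrier) auto
  moreover have "\<forall>x\<in>Omega e \<gamma>. det (hessian (barrier e \<gamma> C0 a b) x)
      \<le> \<bar>barrier e \<gamma> C0 a b x\<bar> powr (- (n + 2 + k))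
        * (x \<bullet> grad (barrier e \<gamma> C0 a b) x - barrier e \<gamma> C0 a b x) powr (- k)"
    using det_hessian_barrier_le[of _ e, OF _ \<open>k \<ge> 0\<close> \<open>0 < \<gamma>\<close> \<open>\<gamma> < 1\<close> \<open>0 < C0\<close>] small
    unfolding n_def a_def b_def by blast
  moreover have "\<forall>x\<in>frontier (Omega e \<gamma>). barrier e \<gamma> C0 a b x = 0"
    using barrier_frontier[OF \<open>a + b = 1\<close>] by blast
  moreover have "barrier e \<gamma> C0 a b
      = (\<lambda>x. C0 * (x $ e + \<gamma>) - C0 * (x $ e + \<gamma>) powr a * (1 - xprime_sq e x) powr b)"
    by (simp add: fun_eq_iff barrier_def profile_def mult.assoc)
  ultimately show ?thesis
    using \<open>0 < C0\<close> unfolding Let_def n_def[symmetric] a_def[symmetric] b_def[symmetric] by auto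
qed

end
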